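(* Let $\alpha\in(0,1)$, $R_{th}>0$ and put $\varepsilon = 2^{2R_{th}/(1-\alpha)}-1$. For a link $j\in\{SR_m,\;R_mD\}$ let the IQI amplitude/phase parameters $\xi_{t_j},\xi_{r_j}>0$, $\phi_{t_j},\phi_{r_j}\in\mathbb{R}$ be given, set $\mu_{t_j}=\tfrac12(1+\xi_{t_j}e^{i\phi_{t_j}})$, $v_{t_j}=\tfrac12(1-\xi_{t_j}e^{-i\phi_{t_j}})$, $\mu_{r_j}=\tfrac12(1+\xi_{r_j}e^{-i\phi_{r_j}})$, $v_{r_j}=\tfrac12(1-\xi_{r_j}e^{i\phi_{r_j}})$, and $p_j=|\mu_{t_j}\mu_{r_j}+v_{t_j}^*v_{r_j}|^2$, $q_j=|\mu_{r_j}v_{t_j}+\mu_{t_j}^*v_{r_j}|^2$. Assume $p_j-\varepsilon q_j>0$ for both links. Let $X_{SR_m}=|\hat h_{SR_m}|^2$ and $X_{R_mD}=|\hat h_{R_mD}|^2$ be independent exponential random variables with rates $\lambda_{SR_m}>0$ and $\lambda_{R_mD}>0$ (i.e. $\Pr\{X_j>x\}=e^{-\lambda_j x}$ for $x\ge 0$), and let the channel-estimation-error variances satisfy $\sigma^2_{e_{SR_m}}=\sigma^2_{e_{R_mD}}=t>0$. Define the high-SNR capacities $$C^{\infty}_{j}=\frac{1-\alpha}{2}\log_2\!\Big(1+\frac{X_j p_j}{\sigma^2_{e_j}p_j+X_j q_j+\sigma^2_{e_j}q_j}\Big),\quad j\in\{SR_m,R_mD\}.$$ Then $$\Pr\{\min(C^\infty_{SR_m},C^\infty_{R_mD})<R_{th}\}=1-e^{-\lambda_{SR_m}H_1-\lambda_{R_mD}H_2},$$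 where $H_1=\dfrac{\varepsilon\sigma^2_{e_{SR_m}}(p_{SR_m}+q_{SR_m})}{p_{SR_m}-\varepsilon q_{SR_m}}$ and $H_2=\dfrac{\varepsilon\sigma^2_{e_{R_mD}}(p_{R_mD}+q_{R_mD})}{p_{R_mD}-\varepsilon q_{R_mD}}$.
   Context: Dual-hop decode-and-forward relaying from a source $S$ via a randomly chosen relay $R_m$ to a destination $D$, in the presence of transmitter/receiver I/Q imbalance and channel estimation errors; $\hat h_j$ denotes the estimated channel of link $j$ under Rayleigh fading, $\sigma^2_{e_j}$ the estimation-error variance, $\alpha$ the energy-harvesting time-allocation factor. The quantity on the left is the asymptotic (high-SNR) outage probability of random relay selection; $z^*$ denotes complex conjugate and $i$ the imaginary unit. *)

theory Defs
  imports "HOL-Probability.Probability"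
begin

definition mu_t :: "real \<Rightarrow> real \<Rightarrow> complex" where
  "mu_t xi phi = (1 + complex_of_real xi * exp (\<i> * complex_of_real phi)) / 2"
definition v_t :: "real \<Rightarrow> real \<Rightarrow> complex" where
  "v_t xi phi = (1 - complex_of_real xi * exp (- \<i> * complex_of_real phi)) / 2"
definition mu_r :: "real \<Rightarrow> real \<Rightarrow> complex" where
  "mu_r xi phi = (1 + complex_of_real xi * exp (- \<i> * complex_of_real phi)) / 2"
definition v_r :: "real \<Rightarrow> real \<Rightarrow> complex" where
  "v_r xi phi = (1 - complex_of_real xi * exp (\<i> * complex_of_real phi)) / 2"

definition iq_p :: "real \<Rightarrow> real \<Rightarrow> real \<Rightarrow> real \<Rightarrow> real" where
  "iq_p xt pt xr pr = (cmod (mu_t xt pt * mu_r xr pr + cnj (v_t xt pt) * v_r xr pr))\<^sup>2"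
definition iq_q :: "real \<Rightarrow> real \<Rightarrow> real \<Rightarrow> real \<Rightarrow> real" where
  "iq_q xt pt xr pr = (cmod (mu_r xr pr * v_t xt pt + cnj (mu_t xt pt) * v_r xr pr))\<^sup>2"

definition cap_inf :: "real \<Rightarrow> real \<Rightarrow> real \<Rightarrow> real \<Rightarrow> real \<Rightarrow> real" where
  "cap_inf \<alpha> s p q x = (1 - \<alpha>) / 2 * log 2 (1 + x * p / (s * p + x * q + s * q))"

end

theory Submission
  imports Defs
begin

(* For X \<ge> 0 the capacity inequality C < Rth, after exponentiating, is a linear inequality in X,
   so the outage event is {X1 < H1} \<union> {X2 < H2}.  Its complement is an intersection of
   independent events, each of probability exp(- lam * H) by left-continuity of the survival
   function. *)

lemma iq_q_nonneg: "0 \<le> iq_q xt pt xr pr"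
  unfolding iq_q_def by simp

lemma cap_inf_less_iff:
  fixes \<alpha> Rth t p q x \<epsilon> :: real
  assumes "\<alpha> < 1" "0 < t" "0 \<le> q" "0 \<le> x"
    and \<epsilon>: "\<epsilon> = 2 powr (2 * Rth / (1 - \<alpha>)) - 1"
    and pq: "p - \<epsilon> * q > 0"
  shows "cap_inf \<alpha> t p q x < Rth \<longleftrightarrow> x < \<epsilon> * t * (p + q) / (p - \<epsilon> * q)"
proof -
  define D where "D = t * p + x * q + t * q"
  (* \<epsilon> > -1 gives p + q > (1 + \<epsilon>) q \<ge> 0, so no sign condition on p or Rth is needed *)
  have "(1 + \<epsilon>) * q \<ge> 0"
    using \<epsilon> \<open>0 \<le> q\<close> by simp
  then have pq_pos: "p + q > 0"
    using pq by (simp add: algebra_simps)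
  have "D = t * (p + q) + x * q"
    unfolding D_def by (simp add: algebra_simps)
  then have D_pos: "D > 0"
    using pq_pos assms by (simp add: add_pos_nonneg)
  have "1 + x * p / D = (x + t) * (p + q) / D"
    using D_pos unfolding D_def by (simp add: field_simps)
  then have arg_pos: "1 + x * p / D > 0"
    using D_pos pq_pos assms by simp
  have "cap_inf \<alpha> t p q x < Rth \<longleftrightarrow> log 2 (1 + x * p / D) < 2 * Rth / (1 - \<alpha>)"
    unfolding cap_inf_def D_def[symmetric] using assms by (simp add: field_simps)
  also have "\<dots> \<longleftrightarrow> 1 + x * p / D < 1 + \<epsilon>"
    using arg_pos \<epsilon> by (subst log_less_iff) auto
  also have "\<dots> \<longleftrightarrow> x * p < \<epsilon> * D"
    using D_pos by (simp add: pos_divide_less_eq)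
  also have "\<dots> \<longleftrightarrow> x * (p - \<epsilon> * q) < \<epsilon> * t * (p + q)"
    unfolding D_def by (simp add: algebra_simps)
  also have "\<dots> \<longleftrightarrow> x < \<epsilon> * t * (p + q) / (p - \<epsilon> * q)"
    using pq by (simp add: pos_less_divide_eq)
  finally show ?thesis .
qed

lemma outage_threshold_pos:
  fixes \<epsilon> t p q :: real
  assumes "0 < \<epsilon>" "0 < t" "0 \<le> q" "p - \<epsilon> * q > 0"
  shows "0 < \<epsilon> * t * (p + q) / (p - \<epsilon> * q)"
proof -
  have "\<epsilon> * q \<ge> 0"
    using assms by simp
  then have "p + q > 0"
    using assms by linarith
  then show ?thesis
    using assms by simp
qed

context prob_space
begin

lemma tendsto_prob_greater_at_left:
  fixes X :: "'a \<Rightarrow> real"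
  assumes X: "X \<in> borel_measurable M"
  shows "((\<lambda>x. prob {\<omega> \<in> space M. X \<omega> > x}) \<longlongrightarrow> prob {\<omega> \<in> space M. X \<omega> \<ge> a}) (at_left a)"
proof -
  interpret D: real_distribution "distr M borel X"
    using X by simp
  have gt: "prob {\<omega> \<in> space M. X \<omega> > x} = 1 - cdf (distr M borel X) x" for x
  proof -
    have "{\<omega> \<in> space M. X \<omega> > x} = space M - X -` {..x} \<inter> space M"
      by auto
    then show ?thesis
      using X by (simp add: cdf_def measure_distr prob_compl)
  qed
  have ge: "prob {\<omega> \<in> space M. X \<omega> \<ge> a} = 1 - measure (distr M borel X) {..<a}"
  proof -
    have "{\<omega> \<in> space M. X \<omega> \<ge> a} = space M - X -` {..<a} \<inter> space M"
      by auto
    then show ?thesis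
      using X by (simp add: measure_distr prob_compl)
  qed
  show ?thesis
    unfolding gt ge by (intro tendsto_diff tendsto_const D.cdf_at_left)
qed

lemma prob_ge_exponential:
  fixes X :: "'a \<Rightarrow> real"
  assumes X: "X \<in> borel_measurable M" and "0 < a"
    and surv: "\<And>x. x \<ge> 0 \<Longrightarrow> prob {\<omega> \<in> space M. X \<omega> > x} = exp (- lam * x)"
  shows "prob {\<omega> \<in> space M. X \<omega> \<ge> a} = exp (- lam * a)"
proof (rule tendsto_unique[OF trivial_limit_at_left_real])
  show "((\<lambda>x. prob {\<omega> \<in> space M. X \<omega> > x}) \<longlongrightarrow> prob {\<omega> \<in> space M. X \<omega> \<ge> a}) (at_left a)"
    using X by (rule tendsto_prob_greater_at_left)
  have "((\<lambda>x. exp (- lam * x)) \<longlongrightarrow> exp (- lam * a)) (at_left a)"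
    by (intro tendsto_intros)
  moreover have "eventually (\<lambda>x. exp (- lam * x) = prob {\<omega> \<in> space M. X \<omega> > x}) (at_left a)"
    using eventually_at_left_real[OF \<open>0 < a\<close>] by eventually_elim (simp add: surv)
  ultimately show "((\<lambda>x. prob {\<omega> \<in> space M. X \<omega> > x}) \<longlongrightarrow> exp (- lam * a)) (at_left a)"
    by (rule Lim_transform_eventually)
qed

lemma AE_nonneg_exponential:
  fixes X :: "'a \<Rightarrow> real"
  assumes surv: "\<And>x. x \<ge> 0 \<Longrightarrow> prob {\<omega> \<in> space M. X \<omega> > x} = exp (- lam * x)"
  shows "AE \<omega> in M. X \<omega> \<ge> 0"
proof -
  have "prob {\<omega> \<in> space M. X \<omega> > 0} = 1"
    using surv[of 0] by simp
  then have "AE \<omega> in M. \<omega> \<in> {\<omega> \<in> space M. X \<omega> > 0}"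
    by (rule AE_prob_1)
  then show ?thesis
    by eventually_elim auto
qed

lemma prob_less_disj_indep_var:
  fixes X1 X2 :: "'a \<Rightarrow> real"
  assumes "indep_var borel X1 borel X2"
    and [measurable]: "X1 \<in> borel_measurable M" "X2 \<in> borel_measurable M"
  shows "prob {\<omega> \<in> space M. X1 \<omega> < a \<or> X2 \<omega> < b}
           = 1 - prob {\<omega> \<in> space M. X1 \<omega> \<ge> a} * prob {\<omega> \<in> space M. X2 \<omega> \<ge> b}"
proof -
  have "{\<omega> \<in> space M. X1 \<omega> < a \<or> X2 \<omega> < b}
          = space M - (\<lambda>\<omega>. (X1 \<omega>, X2 \<omega>)) -` ({a..} \<times> {b..}) \<inter> space M"
    by auto
  also have "prob \<dots> = 1 - prob ((\<lambda>\<omega>. (X1 \<omega>, X2 \<omega>)) -` ({a..} \<times> {b..}) \<inter> space M)"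
    by (intro prob_compl) measurable
  also have "prob ((\<lambda>\<omega>. (X1 \<omega>, X2 \<omega>)) -` ({a..} \<times> {b..}) \<inter> space M)
               = prob (X1 -` {a..} \<inter> space M) * prob (X2 -` {b..} \<inter> space M)"
    using assms(1) by (intro indep_varD) auto
  also have "X1 -` {a..} \<inter> space M = {\<omega> \<in> space M. X1 \<omega> \<ge> a}"
    by auto
  also have "X2 -` {b..} \<inter> space M = {\<omega> \<in> space M. X2 \<omega> \<ge> b}"
    by auto
  finally show ?thesis .
qed

end

theorem corollary1:
  fixes M :: "'w measure" and X1 X2 :: "'w \<Rightarrow> real"
    and \<alpha> Rth t lam1 lam2 :: real
    and xt1 pt1 xr1 pr1 xt2 pt2 xr2 pr2 :: real
  defines "\<epsilon> \<equiv> 2 powr (2 * Rth / (1 - \<alpha>)) - 1"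
  defines "p1 \<equiv> iq_p xt1 pt1 xr1 pr1" and "q1 \<equiv> iq_q xt1 pt1 xr1 pr1"
  defines "p2 \<equiv> iq_p xt2 pt2 xr2 pr2" and "q2 \<equiv> iq_q xt2 pt2 xr2 pr2"
  assumes "prob_space M"
    and "0 < \<alpha>" "\<alpha> < 1" "0 < Rth"
    and "0 < xt1" "0 < xr1" "0 < xt2" "0 < xr2"
    and "p1 - \<epsilon> * q1 > 0" "p2 - \<epsilon> * q2 > 0"
    and "0 < lam1" "0 < lam2" "0 < t"
    and "X1 \<in> borel_measurable M" "X2 \<in> borel_measurable M"
    and "prob_space.indep_var M borel X1 borel X2"
    and "\<And>x. x \<ge> 0 \<Longrightarrow> measure M {\<omega> \<in> space M. X1 \<omega> > x} = exp (- lam1 * x)"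
    and "\<And>x. x \<ge> 0 \<Longrightarrow> measure M {\<omega> \<in> space M. X2 \<omega> > x} = exp (- lam2 * x)"
  shows "measure M {\<omega> \<in> space M.
           min (cap_inf \<alpha> t p1 q1 (X1 \<omega>)) (cap_inf \<alpha> t p2 q2 (X2 \<omega>)) < Rth}
         = 1 - exp (- lam1 * (\<epsilon> * t * (p1 + q1) / (p1 - \<epsilon> * q1))
                    - lam2 * (\<epsilon> * t * (p2 + q2) / (p2 - \<epsilon> * q2)))"
proof -
  interpret prob_space M by fact
  note [measurable] = \<open>X1 \<in> borel_measurable M\<close> \<open>X2 \<in> borel_measurable M\<close>
  define H1 where "H1 = \<epsilon> * t * (p1 + q1) / (p1 - \<epsilon> * q1)"
  define H2 where "H2 = \<epsilon> * t * (p2 + q2) / (p2 - \<epsilon> * q2)"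
  have "\<epsilon> > 0"
    unfolding \<epsilon>_def using assms by (simp add: gr_one_powr)
  have "q1 \<ge> 0" "q2 \<ge> 0"
    unfolding q1_def q2_def by (rule iq_q_nonneg)+
  then have "H1 > 0" "H2 > 0"
    unfolding H1_def H2_def using assms \<open>\<epsilon> > 0\<close> by (simp_all add: outage_threshold_pos)
  have "AE \<omega> in M. X1 \<omega> \<ge> 0" "AE \<omega> in M. X2 \<omega> \<ge> 0"
    using assms by (auto intro!: AE_nonneg_exponential)
  then have "AE \<omega> in M. min (cap_inf \<alpha> t p1 q1 (X1 \<omega>)) (cap_inf \<alpha> t p2 q2 (X2 \<omega>)) < Rth
                         \<longleftrightarrow> X1 \<omega> < H1 \<or> X2 \<omega> < H2"
  proof eventually_elim
    case (elim \<omega>)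
    then show ?case
      unfolding min_less_iff_disj H1_def H2_def using assms \<open>q1 \<ge> 0\<close> \<open>q2 \<ge> 0\<close>
      by (simp add: cap_inf_less_iff)
  qed
  then have "measure M {\<omega> \<in> space M.
               min (cap_inf \<alpha> t p1 q1 (X1 \<omega>)) (cap_inf \<alpha> t p2 q2 (X2 \<omega>)) < Rth}
             = prob {\<omega> \<in> space M. X1 \<omega> < H1 \<or> X2 \<omega> < H2}"
    by (intro measure_eq_AE) (simp_all add: cap_inf_def)
  also have "\<dots> = 1 - exp (- lam1 * H1) * exp (- lam2 * H2)"
    using assms \<open>H1 > 0\<close> \<open>H2 > 0\<close>
    by (simp add: prob_less_disj_indep_var prob_ge_exponential[of X1 H1 lam1]
                  prob_ge_exponential[of X2 H2 lam2])
  finally show ?thesis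
    unfolding H1_def H2_def by (simp add: exp_add[symmetric])
qed

end
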